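(* Let $L$ be a bounded lattice and $\otimes$ a t-norm on $L$ that is both $\wedge$-distributive and $\vee$-distributive and such that $\langle L,\otimes\rangle$ is divisible. Let $k_1,k_2\in\mathbb{N}^*$ and let $F_1,F_2:L^2\to L$ be such that, for $i=1,2$, $F_i$ is $\otimes^{k_i}$-homogeneous, has $1_L$ as neutral element and satisfies $F_i(x,y)=F_i(x\wedge y,x\vee y)$ for all $x,y\in L$. If $k_1\ge k_2$, then $F_1(x,y)\le_LF_2(x,y)$ for all $x,y\in L$.
   Context: A t-norm on $L$ is a commutative, associative map $L^2\to L$, non-decreasing in each argument, with neutral element $1_L$; $\wedge$-distributive: $x\otimes(y\wedge z)=(x\otimes y)\wedge(x\otimes z)$; $\vee$-distributive: $x\otimes(y\vee z)=(x\otimes y)\vee(x\otimes z)$. $\langle L,\otimes\rangle$ is divisible if for all $y\le_Lx$ there is $z$ with $y=x\otimes z$. Powers: $\lambda_\otimes^{(0)}=1_L$, $\lambda_\otimes^{(1)}=\lambda$, $\lambda_\otimes^{(m)}=\lambda\otimes\lambda_\otimes^{(m-1)}$ for $m\ge2$. $F$ is $\otimes^k$-homogeneous if $F(\lambda\otimes x,\lambda\otimes y)=\lambda_\otimes^{(k)}\otimes F(x,y)$ for all $\lambda,x,y$. $1_L$ is neutral for $F$ if $F(x,1_L)=F(1_L,x)=x$ for all $x$. *)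

theory Defs
  imports Main
begin

text \<open>L is modelled as a type of class bounded_lattice; 1_L is top, 0_L is bot.\<close>

definition is_tnorm :: "('a::bounded_lattice \<Rightarrow> 'a \<Rightarrow> 'a) \<Rightarrow> bool" where
  "is_tnorm T \<longleftrightarrow>
     (\<forall>x y. T x y = T y x) \<and>
     (\<forall>x y z. T x (T y z) = T (T x y) z) \<and>
     (\<forall>x y z. y \<le> z \<longrightarrow> T x y \<le> T x z) \<and>
     (\<forall>x y z. x \<le> y \<longrightarrow> T x z \<le> T y z) \<and>
     (\<forall>x. T x top = x \<and> T top x = x)"

definition meet_distributive :: "('a::bounded_lattice \<Rightarrow> 'a \<Rightarrow> 'a) \<Rightarrow> bool" where
  "meet_distributive T \<longleftrightarrow> (\<forall>x y z. T x (inf y z) = inf (T x y) (T x z))"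

definition join_distributive :: "('a::bounded_lattice \<Rightarrow> 'a \<Rightarrow> 'a) \<Rightarrow> bool" where
  "join_distributive T \<longleftrightarrow> (\<forall>x y z. T x (sup y z) = sup (T x y) (T x z))"

definition divisible :: "('a::bounded_lattice \<Rightarrow> 'a \<Rightarrow> 'a) \<Rightarrow> bool" where
  "divisible T \<longleftrightarrow> (\<forall>x y. y \<le> x \<longrightarrow> (\<exists>z. y = T x z))"

fun tpow :: "('a::bounded_lattice \<Rightarrow> 'a \<Rightarrow> 'a) \<Rightarrow> 'a \<Rightarrow> nat \<Rightarrow> 'a" where
  "tpow T l 0 = top"
| "tpow T l (Suc 0) = l"
| "tpow T l (Suc (Suc m)) = T l (tpow T l (Suc m))"

definition homogeneous :: "('a::bounded_lattice \<Rightarrow> 'a \<Rightarrow> 'a) \<Rightarrow> nat \<Rightarrow> ('a \<Rightarrow> 'a \<Rightarrow> 'a) \<Rightarrow> bool" where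
  "homogeneous T k F \<longleftrightarrow> (\<forall>l x y. F (T l x) (T l y) = T (tpow T l k) (F x y))"

definition neutral_top :: "('a::bounded_lattice \<Rightarrow> 'a \<Rightarrow> 'a) \<Rightarrow> bool" where
  "neutral_top F \<longleftrightarrow> (\<forall>x. F x top = x \<and> F top x = x)"

end

theory Submission
  imports Defs
begin

text \<open>Divisibility gives \<open>z\<close> with \<open>x \<sqinter> y = (x \<squnion> y) \<otimes> z\<close>. As \<open>F(x, y) = F(x \<sqinter> y, x \<squnion> y)\<close>,
  homogeneity and neutrality of \<open>1\<close> give \<open>F(x, y) = (x \<squnion> y)^k \<otimes> z\<close> for an
  \<open>\<otimes>^k\<close>-homogeneous \<open>F\<close>, and \<open>\<otimes>\<close>-powers of a fixed element decrease with the exponent.\<close>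

lemma tnorm_le_right:
  assumes "is_tnorm T"
  shows "T l x \<le> x"
proof -
  have "T l x \<le> T top x" using assms top_greatest unfolding is_tnorm_def by blast
  also have "\<dots> = x" using assms unfolding is_tnorm_def by simp
  finally show ?thesis .
qed

lemma tpow_Suc_le:
  assumes "is_tnorm T"
  shows "tpow T l (Suc n) \<le> tpow T l n"
  by (cases n) (simp_all add: tnorm_le_right[OF assms])

lemma tpow_antimono:
  assumes "is_tnorm T" and "m \<le> n"
  shows "tpow T l n \<le> tpow T l m"
  using lift_Suc_antimono_le[of "tpow T l", OF tpow_Suc_le[OF assms(1)] assms(2)] .

lemma homogeneous_neutral_top_eq:
  assumes "is_tnorm T" and "homogeneous T k F" and "neutral_top F"
  shows "F (T b z) b = T (tpow T b k) z"
proof -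
  have "F (T b z) b = F (T b z) (T b top)"
    using assms(1) unfolding is_tnorm_def by simp
  also have "\<dots> = T (tpow T b k) (F z top)"
    using assms(2) unfolding homogeneous_def by blast
  also have "\<dots> = T (tpow T b k) z"
    using assms(3) unfolding neutral_top_def by simp
  finally show ?thesis .
qed

theorem mainTheorem13:
  fixes T F1 F2 :: "'a::bounded_lattice \<Rightarrow> 'a \<Rightarrow> 'a" and k1 k2 :: nat
  assumes "is_tnorm T" and "meet_distributive T" and "join_distributive T"
    and "divisible T"
    and "k1 \<ge> 1" and "k2 \<ge> 1"
    and "homogeneous T k1 F1" and "homogeneous T k2 F2"
    and "neutral_top F1" and "neutral_top F2"
    and "\<forall>x y. F1 x y = F1 (inf x y) (sup x y)"
    and "\<forall>x y. F2 x y = F2 (inf x y) (sup x y)"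
    and "k1 \<ge> k2"
  shows "\<forall>x y. F1 x y \<le> F2 x y"
proof (intro allI)
  fix x y :: 'a
  obtain z where z: "inf x y = T (sup x y) z"
    using assms(4) unfolding divisible_def by (meson inf_le1 le_supI1)
  have "F1 x y = T (tpow T (sup x y) k1) z"
    using assms(11) homogeneous_neutral_top_eq[OF assms(1,7,9)] z by metis
  moreover have "F2 x y = T (tpow T (sup x y) k2) z"
    using assms(12) homogeneous_neutral_top_eq[OF assms(1,8,10)] z by metis
  moreover have "tpow T (sup x y) k1 \<le> tpow T (sup x y) k2"
    using tpow_antimono[OF assms(1,13)] .
  ultimately show "F1 x y \<le> F2 x y"
    using assms(1) unfolding is_tnorm_def by simp
qed

end
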